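(* Let $p\ge5$ be prime. Then $D^pP$ is a modular form mod $p$; that is, the image of $D^pP\in\mathbb{Z}_{(p)}[P,Q,R]$ in $(\mathbb{Z}/p\mathbb{Z})[P,Q,R]$ lies in $(\mathbb{Z}/p\mathbb{Z})[Q,R]$.
   Context: $\mathbb{Z}_{(p)}$ is the localization of $\mathbb{Z}$ at $p$. $P=E_2,Q=E_4,R=E_6$ are the normalized Eisenstein series, viewed as independent variables. $D=q\frac{d}{dq}$ acts on $\mathbb{Z}_{(p)}[P,Q,R]$ as the derivation with $DP=\frac{P^2-Q}{12}$, $DQ=\frac{PQ-R}{3}$, $DR=\frac{PR-Q^2}{2}$. *)

theory Defs
  imports Complex_Main "HOL-Library.Poly_Mapping" "HOL-Computational_Algebra.Primes"
begin

type_synonym mpoly = "(nat \<Rightarrow>\<^sub>0 nat) \<Rightarrow>\<^sub>0 rat"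

definition Const :: "rat \<Rightarrow> mpoly" where
  "Const c = Poly_Mapping.single 0 c"

definition Var :: "nat \<Rightarrow> mpoly" where
  "Var i = Poly_Mapping.single (Poly_Mapping.single i 1) 1"

abbreviation "PP \<equiv> Var 0"
abbreviation "QQ \<equiv> Var 1"
abbreviation "RR \<equiv> Var 2"

definition pderiv_var :: "nat \<Rightarrow> mpoly \<Rightarrow> mpoly" where
  "pderiv_var i f = (\<Sum>m\<in>Poly_Mapping.keys f.
      Poly_Mapping.single (m - Poly_Mapping.single i 1)
        (Poly_Mapping.lookup f m * of_nat (Poly_Mapping.lookup (m::nat \<Rightarrow>\<^sub>0 nat) i)))"

text \<open>The Ramanujan derivation D = q d/dq on Q[P,Q,R].\<close>
definition Dop :: "mpoly \<Rightarrow> mpoly" where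
  "Dop f = pderiv_var 0 f * (Const (1/12) * (PP * PP - QQ))
         + pderiv_var 1 f * (Const (1/3) * (PP * QQ - RR))
         + pderiv_var 2 f * (Const (1/2) * (PP * RR - QQ * QQ))"

definition in_Zloc :: "nat \<Rightarrow> rat \<Rightarrow> bool" where
  "in_Zloc p x \<longleftrightarrow> (\<exists>a b::int. b \<noteq> 0 \<and> coprime b (int p) \<and> x = of_int a / of_int b)"

definition poly_in_Zloc :: "nat \<Rightarrow> mpoly \<Rightarrow> bool" where
  "poly_in_Zloc p f \<longleftrightarrow> (\<forall>m. in_Zloc p (Poly_Mapping.lookup f m))"

text \<open>The reduction mod p of f (assumed in Z_(p)[P,Q,R]) lies in (Z/pZ)[Q,R]:
  every coefficient of a monomial involving P lies in p Z_(p).\<close>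
definition reduction_in_QR :: "nat \<Rightarrow> mpoly \<Rightarrow> bool" where
  "reduction_in_QR p f \<longleftrightarrow>
     (\<forall>m::nat \<Rightarrow>\<^sub>0 nat. Poly_Mapping.lookup m 0 \<noteq> 0 \<longrightarrow> in_Zloc p (Poly_Mapping.lookup f m / of_nat p))"

end

theory Submission
  imports Defs
begin

text \<open>Write \<open>\<partial>\<close> for the partial derivative in \<open>P\<close>. Since \<open>D\<close> raises the weight
  (\<open>P, Q, R\<close> having weights 2, 4, 6) by 2, Euler's identity gives the commutator
  \<open>\<partial>(D g) = D(\<partial> g) + (w/12) g\<close> for \<open>g\<close> of weight \<open>w\<close>, and by induction
  \<open>\<partial>(D\<^sup>n\<^sup>+\<^sup>1 P) = (n+1)(n+2)/12 \<cdot> D\<^sup>n P\<close>. For \<open>n + 1 = p\<close> the right-hand side is divisible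
  by \<open>p\<close>, so every coefficient of \<open>D\<^sup>p P\<close> at a monomial \<open>P\<^sup>a Q\<^sup>b R\<^sup>c\<close> with \<open>p \<nmid> a\<close> is
  divisible by \<open>p\<close>. The remaining monomials with \<open>a > 0\<close> have \<open>a \<ge> p\<close>, and do not
  occur in \<open>D\<^sup>p P\<close> because \<open>2a + 4b + 6c = 2p + 2\<close> forces \<open>a < p\<close>.\<close>

abbreviation lookup where "lookup \<equiv> Poly_Mapping.lookup"

abbreviation var_exp :: "nat \<Rightarrow> nat \<Rightarrow>\<^sub>0 nat" where
  "var_exp i \<equiv> Poly_Mapping.single i 1"

lemma eq_var_exp_add_iff:
  "k = var_exp i + q \<longleftrightarrow> 0 < lookup k i \<and> q = k - var_exp i"
  by (auto simp: poly_mapping_eq_iff lookup_add lookup_minus lookup_single when_def fun_eq_iff)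

lemma diff_var_exp_add_var_exp: "0 < lookup k i \<Longrightarrow> k - var_exp i + var_exp i = k"
  by (rule poly_mapping_eqI) (auto simp: lookup_add lookup_minus lookup_single when_def)

lemma add_var_exp_diff_var_exp: "k + var_exp i - var_exp i = k"
  by (rule poly_mapping_eqI) (simp add: lookup_add lookup_minus)

lemma lookup_Var_mult:
  "lookup (Var i * g) k = (if 0 < lookup k i then lookup g (k - var_exp i) else 0)"
proof -
  have "lookup (Var i * g) k = Sum_any (\<lambda>q. lookup g q when k = var_exp i + q)"
    by (simp add: Var_def lookup_mult lookup_single when_mult Sum_any_right_distrib)
  also have "\<dots> = Sum_any (\<lambda>q. (if 0 < lookup k i then lookup g (k - var_exp i) else 0)
                                when q = k - var_exp i)"
    by (rule Sum_any.cong) (subst eq_var_exp_add_iff, auto simp: when_def)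
  finally show ?thesis by simp
qed

lemma lookup_Const: "lookup (Const c) k = (c when k = 0)"
  by (simp add: Const_def lookup_single when_def)

lemma lookup_Const_mult: "lookup (Const c * g) k = c * lookup g k"
  by (simp add: Const_def lookup_mult lookup_single when_mult Sum_any_right_distrib mult_when)

lemma Const_add: "Const a + Const b = Const (a + b)"
  by (simp add: Const_def single_add)

lemma Const_mult: "Const a * Const b = Const (a * b)"
  by (simp add: Const_def mult_single)

lemma Const_numeral: "Const (numeral n) = numeral n"
  by (simp add: Const_def)

lemma Const_1: "Const 1 = 1"
  by (simp add: Const_def)

lemma lookup_numeral_mult: "lookup (numeral n * f :: mpoly) k = numeral n * lookup f k"
  by (metis Const_numeral lookup_Const_mult)

lemma lookup_pderiv_var:
  "lookup (pderiv_var i f) k = of_nat (lookup k i + 1) * lookup f (k + var_exp i)"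
proof -
  let ?c = "\<lambda>m. lookup f m * of_nat (lookup m i)"
  have "lookup (pderiv_var i f) k = (\<Sum>m\<in>Poly_Mapping.keys f. ?c m when m - var_exp i = k)"
    by (simp add: pderiv_var_def lookup_sum lookup_single)
  also have "\<dots> = (\<Sum>m\<in>Poly_Mapping.keys f. ?c m when m = k + var_exp i)"
  proof (rule sum.cong)
    fix m
    show "(?c m when m - var_exp i = k) = (?c m when m = k + var_exp i)"
    proof (cases "lookup m i = 0")
      case True
      then have "m \<noteq> k + var_exp i" by (auto simp: lookup_add)
      with True show ?thesis by (simp add: when_def)
    next
      case False
      then have "m - var_exp i = k \<longleftrightarrow> m = k + var_exp i"
        by (metis add.commute eq_var_exp_add_iff gr0I)
      then show ?thesis by simp
    qed
  qed simp
  also have "\<dots> = of_nat (lookup k i + 1) * lookup f (k + var_exp i)"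
    by (auto simp: when_def sum.delta' lookup_add in_keys_iff)
  finally show ?thesis .
qed

lemma lookup_pderiv_var_diff_var_exp:
  "0 < lookup m i \<Longrightarrow> lookup (pderiv_var i f) (m - var_exp i) = of_nat (lookup m i) * lookup f m"
  using diff_var_exp_add_var_exp[of m i] by (simp add: lookup_pderiv_var lookup_minus)

lemma pderiv_var_add: "pderiv_var i (f + g) = pderiv_var i f + pderiv_var i g"
  by (rule poly_mapping_eqI) (simp add: lookup_pderiv_var lookup_add algebra_simps)

lemma pderiv_var_diff: "pderiv_var i (f - g) = pderiv_var i f - pderiv_var i g"
  by (rule poly_mapping_eqI) (simp add: lookup_pderiv_var lookup_minus algebra_simps)

lemma pderiv_var_Const_mult: "pderiv_var i (Const c * f) = Const c * pderiv_var i f"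
  by (rule poly_mapping_eqI) (simp add: lookup_pderiv_var lookup_Const_mult mult.left_commute)

lemma pderiv_var_Const: "pderiv_var i (Const c) = 0"
proof (rule poly_mapping_eqI)
  fix k
  have "lookup (k + var_exp i) i \<noteq> 0"
    by (simp add: lookup_add)
  then have "k + var_exp i \<noteq> 0"
    by auto
  then show "lookup (pderiv_var i (Const c)) k = lookup 0 k"
    by (simp add: lookup_pderiv_var lookup_Const)
qed

lemma pderiv_var_commute: "pderiv_var i (pderiv_var j f) = pderiv_var j (pderiv_var i f)"
  by (rule poly_mapping_eqI) (simp add: lookup_pderiv_var lookup_add lookup_single when_def add_ac)

lemma pderiv_var_Var_mult:
  "pderiv_var i (Var j * f) = Var j * pderiv_var i f + (if i = j then f else 0)"
proof (rule poly_mapping_eqI)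
  fix k
  show "lookup (pderiv_var i (Var j * f)) k = lookup (Var j * pderiv_var i f + (if i = j then f else 0)) k"
  proof (cases "i = j")
    case True
    have "lookup (k - var_exp i) i = lookup k i - 1"
      by (simp add: lookup_minus)
    with True show ?thesis
      using diff_var_exp_add_var_exp[of k i] add_var_exp_diff_var_exp[of k i]
      by (simp add: lookup_pderiv_var lookup_Var_mult lookup_add)
        (auto simp: distrib_left distrib_right of_nat_diff)
  next
    case False
    then have "0 < lookup k j \<Longrightarrow> k + var_exp i - var_exp j = k - var_exp j + var_exp i"
      by (intro poly_mapping_eqI) (auto simp: lookup_add lookup_minus lookup_single when_def)
    with False show ?thesis
      by (simp add: lookup_pderiv_var lookup_Var_mult lookup_add lookup_minus lookup_single)
  qed
qed

lemma pderiv_var_Var_self: "pderiv_var i (Var i) = 1"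
proof (rule poly_mapping_eqI)
  fix k
  have "var_exp i = k + var_exp i \<longleftrightarrow> k = 0"
    by (metis add_0 add_cancel_right_left)
  then show "lookup (pderiv_var i (Var i)) k = lookup 1 k"
    by (simp add: lookup_pderiv_var Var_def lookup_single when_def lookup_one)
qed

lemma Dop_eq:
  "Dop f = Const (1/12) * (PP * (PP * pderiv_var 0 f) - QQ * pderiv_var 0 f)
         + Const (1/3) * (PP * (QQ * pderiv_var 1 f) - RR * pderiv_var 1 f)
         + Const (1/2) * (PP * (RR * pderiv_var 2 f) - QQ * (QQ * pderiv_var 2 f))"
  by (simp add: Dop_def algebra_simps)

lemma Dop_Const_mult: "Dop (Const c * f) = Const c * Dop f"
  by (simp only: Dop_eq pderiv_var_Const_mult) (simp add: algebra_simps)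

lemma Dop_Const: "Dop (Const c) = 0"
  by (simp add: Dop_def pderiv_var_Const)

lemma pderiv_var_0_Dop:
  "pderiv_var 0 (Dop g) = Dop (pderiv_var 0 g)
     + Const (1/12) * (2 * (PP * pderiv_var 0 g) + 4 * (QQ * pderiv_var 1 g) + 6 * (RR * pderiv_var 2 g))"
proof -
  have weights: "Const (1/3) = 4 * Const (1/12)" "Const (1/2) = 6 * Const (1/12)"
    by (simp_all add: Const_numeral[symmetric] Const_mult)
  show ?thesis
    by (simp only: Dop_eq pderiv_var_add pderiv_var_diff pderiv_var_Const_mult pderiv_var_Var_mult
        if_True if_False pderiv_var_commute[of 0 1] pderiv_var_commute[of 0 2])
      (simp add: weights algebra_simps)
qed

text \<open>\<open>P, Q, R\<close> carry the weights 2, 4, 6 of \<open>E\<^sub>2, E\<^sub>4, E\<^sub>6\<close>.\<close>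

definition var_weight :: "nat \<Rightarrow> int" where
  "var_weight i = (if i < 3 then 2 * int i + 2 else 0)"

definition weight :: "(nat \<Rightarrow>\<^sub>0 nat) \<Rightarrow> int" where
  "weight m = 2 * int (lookup m 0) + 4 * int (lookup m 1) + 6 * int (lookup m 2)"

definition homogeneous :: "int \<Rightarrow> mpoly \<Rightarrow> bool" where
  "homogeneous w f \<longleftrightarrow> (\<forall>m. lookup f m \<noteq> 0 \<longrightarrow> weight m = w)"

lemma weight_add_var_exp: "weight (m + var_exp i) = weight m + var_weight i"
  by (auto simp: weight_def var_weight_def lookup_add lookup_single when_def)

lemma weight_diff_var_exp: "0 < lookup m i \<Longrightarrow> weight (m - var_exp i) = weight m - var_weight i"
  by (metis add_diff_cancel_right' diff_var_exp_add_var_exp weight_add_var_exp)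

lemma homogeneous_add: "homogeneous w f \<Longrightarrow> homogeneous w g \<Longrightarrow> homogeneous w (f + g)"
  unfolding homogeneous_def lookup_add by (metis add_0)

lemma homogeneous_diff: "homogeneous w f \<Longrightarrow> homogeneous w g \<Longrightarrow> homogeneous w (f - g)"
  unfolding homogeneous_def lookup_minus by (metis diff_zero)

lemma homogeneous_Const_mult: "homogeneous w f \<Longrightarrow> homogeneous w (Const c * f)"
  by (auto simp: homogeneous_def lookup_Const_mult)

lemma homogeneous_Var_mult: "homogeneous w f \<Longrightarrow> homogeneous (w + var_weight i) (Var i * f)"
  unfolding homogeneous_def lookup_Var_mult
proof (intro allI impI)
  fix m
  assume "\<forall>m. lookup f m \<noteq> 0 \<longrightarrow> weight m = w"
    and "(if 0 < lookup m i then lookup f (m - var_exp i) else 0) \<noteq> 0"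
  then have "0 < lookup m i" and "weight (m - var_exp i) = w"
    by (auto split: if_splits)
  then show "weight m = w + var_weight i"
    using weight_diff_var_exp[of m i] by simp
qed

lemma homogeneous_pderiv_var: "homogeneous w f \<Longrightarrow> homogeneous (w - var_weight i) (pderiv_var i f)"
  unfolding homogeneous_def lookup_pderiv_var
  by (metis add_diff_cancel_right' mult_eq_0_iff weight_add_var_exp)

lemma homogeneous_Dop: assumes "homogeneous w f" shows "homogeneous (w + 2) (Dop f)"
proof -
  note pderiv = homogeneous_pderiv_var[OF assms]
  have quadratic: "homogeneous (w + 2) (Var j * (Var k * pderiv_var i f))"
    if "var_weight j + var_weight k = var_weight i + 2" for i j k
  proof -
    have "w - var_weight i + var_weight k + var_weight j = w + 2"
      using that by simp
    with homogeneous_Var_mult[OF homogeneous_Var_mult[OF pderiv[of i]], of k j] show ?thesis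
      by (simp only:)
  qed
  have linear: "homogeneous (w + 2) (Var j * pderiv_var i f)"
    if "var_weight j = var_weight i + 2" for i j
  proof -
    have "w - var_weight i + var_weight j = w + 2"
      using that by simp
    with homogeneous_Var_mult[OF pderiv[of i], of j] show ?thesis
      by (simp only:)
  qed
  show ?thesis
    unfolding Dop_eq
    by (intro homogeneous_add homogeneous_diff homogeneous_Const_mult quadratic linear)
      (simp_all add: var_weight_def)
qed

lemma lookup_Var_mult_pderiv_var: "lookup (Var i * pderiv_var i g) m = of_nat (lookup m i) * lookup g m"
  using diff_var_exp_add_var_exp[of m i]
  by (auto simp: lookup_Var_mult lookup_pderiv_var lookup_minus of_nat_diff)

lemma homogeneous_Euler:
  assumes "homogeneous w g"
  shows "2 * (PP * pderiv_var 0 g) + 4 * (QQ * pderiv_var 1 g) + 6 * (RR * pderiv_var 2 g)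
    = Const (of_int w) * g"
proof (rule poly_mapping_eqI)
  fix m
  have "of_int (weight m) * lookup g m = (of_int w :: rat) * lookup g m"
    using assms by (cases "lookup g m = 0") (auto simp: homogeneous_def)
  then show "lookup (2 * (PP * pderiv_var 0 g) + 4 * (QQ * pderiv_var 1 g) + 6 * (RR * pderiv_var 2 g)) m
    = lookup (Const (of_int w) * g) m"
    by (simp only: lookup_add lookup_numeral_mult lookup_Var_mult_pderiv_var lookup_Const_mult)
      (simp add: weight_def algebra_simps)
qed

lemma pderiv_var_0_Dop_homogeneous:
  "homogeneous w g \<Longrightarrow> pderiv_var 0 (Dop g) = Dop (pderiv_var 0 g) + Const (of_int w / 12) * g"
  using pderiv_var_0_Dop[of g] homogeneous_Euler[of w g] by (simp add: Const_mult mult.assoc)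

lemma homogeneous_Dop_power_PP: "homogeneous (2 * int n + 2) ((Dop ^^ n) PP)"
proof (induction n)
  case 0
  then show ?case
    by (auto simp: homogeneous_def Var_def lookup_single when_def weight_def)
next
  case (Suc n)
  then show ?case
    using homogeneous_Dop by (fastforce simp: algebra_simps)
qed

lemma pderiv_var_0_Dop_power_PP:
  "pderiv_var 0 ((Dop ^^ Suc n) PP) = Const (of_nat ((n + 1) * (n + 2)) / 12) * (Dop ^^ n) PP"
proof (induction n)
  case 0
  show ?case
    using pderiv_var_0_Dop_homogeneous[OF homogeneous_Dop_power_PP[of 0]]
    by (simp add: pderiv_var_Var_self Const_1[symmetric] Dop_Const)
next
  case (Suc n)
  let ?f = "(Dop ^^ Suc n) PP"
  have "pderiv_var 0 (Dop ?f) = Dop (pderiv_var 0 ?f) + Const (of_int (2 * int (Suc n) + 2) / 12) * ?f"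
    by (rule pderiv_var_0_Dop_homogeneous[OF homogeneous_Dop_power_PP])
  also have "\<dots> = Const (of_nat ((n + 1) * (n + 2)) / 12 + of_int (2 * int (Suc n) + 2) / 12) * ?f"
    by (simp only: Suc.IH Dop_Const_mult) (simp add: Const_add[symmetric] distrib_right)
  also have "\<dots> = Const (of_nat ((Suc n + 1) * (Suc n + 2)) / 12) * ?f"
    by (rule arg_cong[where f = "\<lambda>c. Const c * ?f"]) (simp add: field_simps)
  finally show ?case by simp
qed

lemma in_Zloc_of_int: "in_Zloc p (of_int a)"
  unfolding in_Zloc_def by (intro exI[of _ a] exI[of _ 1]) simp

lemma in_Zloc_of_nat: "in_Zloc p (of_nat n)"
  using in_Zloc_of_int[of p "int n"] by simp

lemma in_Zloc_inverse_of_nat: "n \<noteq> 0 \<Longrightarrow> coprime n p \<Longrightarrow> in_Zloc p (1 / of_nat n)"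
  unfolding in_Zloc_def by (intro exI[of _ 1] exI[of _ "int n"]) simp

lemma in_Zloc_add: assumes "in_Zloc p x" "in_Zloc p y" shows "in_Zloc p (x + y)"
proof -
  obtain a b a' b' :: int where "b \<noteq> 0" "coprime b (int p)" "x = of_int a / of_int b"
    and "b' \<noteq> 0" "coprime b' (int p)" "y = of_int a' / of_int b'"
    using assms unfolding in_Zloc_def by blast
  then show ?thesis
    unfolding in_Zloc_def
    by (intro exI[of _ "a * b' + a' * b"] exI[of _ "b * b'"]) (simp add: add_frac_eq)
qed

lemma in_Zloc_mult: assumes "in_Zloc p x" "in_Zloc p y" shows "in_Zloc p (x * y)"
proof -
  obtain a b a' b' :: int where "b \<noteq> 0" "coprime b (int p)" "x = of_int a / of_int b"
    and "b' \<noteq> 0" "coprime b' (int p)" "y = of_int a' / of_int b'"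
    using assms unfolding in_Zloc_def by blast
  then show ?thesis
    unfolding in_Zloc_def by (intro exI[of _ "a * a'"] exI[of _ "b * b'"]) simp
qed

lemma in_Zloc_diff: "in_Zloc p x \<Longrightarrow> in_Zloc p y \<Longrightarrow> in_Zloc p (x - y)"
  using in_Zloc_add[OF _ in_Zloc_mult[OF in_Zloc_of_int[of p "-1"]]] by simp

lemma poly_in_Zloc_add: "poly_in_Zloc p f \<Longrightarrow> poly_in_Zloc p g \<Longrightarrow> poly_in_Zloc p (f + g)"
  by (simp add: poly_in_Zloc_def lookup_add in_Zloc_add)

lemma poly_in_Zloc_diff: "poly_in_Zloc p f \<Longrightarrow> poly_in_Zloc p g \<Longrightarrow> poly_in_Zloc p (f - g)"
  by (simp add: poly_in_Zloc_def lookup_minus in_Zloc_diff)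

lemma poly_in_Zloc_Const_mult: "in_Zloc p c \<Longrightarrow> poly_in_Zloc p f \<Longrightarrow> poly_in_Zloc p (Const c * f)"
  by (simp add: poly_in_Zloc_def lookup_Const_mult in_Zloc_mult)

lemma poly_in_Zloc_Var_mult: "poly_in_Zloc p f \<Longrightarrow> poly_in_Zloc p (Var i * f)"
  using in_Zloc_of_int[of p 0] by (simp add: poly_in_Zloc_def lookup_Var_mult)

lemma poly_in_Zloc_pderiv_var: "poly_in_Zloc p f \<Longrightarrow> poly_in_Zloc p (pderiv_var i f)"
  by (simp add: poly_in_Zloc_def lookup_pderiv_var in_Zloc_mult in_Zloc_of_nat del: of_nat_Suc)

lemma coprime_12_prime:
  assumes "prime p" "5 \<le> p" shows "coprime (12::nat) p"
proof -
  have "\<not> p dvd 2" "\<not> p dvd 3"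
    using assms(2) by (auto dest: dvd_imp_le)
  then have "coprime (2::nat) p" "coprime (3::nat) p"
    using prime_imp_coprime[OF assms(1)] coprime_commute by blast+
  then have "coprime (2 * 2 * 3 :: nat) p"
    unfolding coprime_mult_left_iff by blast
  then show ?thesis
    by simp
qed

lemma poly_in_Zloc_Dop:
  assumes "prime p" "5 \<le> p" "poly_in_Zloc p f"
  shows "poly_in_Zloc p (Dop f)"
proof -
  have "in_Zloc p (1 / of_nat n)" if "n dvd 12" "n \<noteq> 0" for n
    using coprime_divisors[OF that(1) dvd_refl coprime_12_prime[OF assms(1,2)]] that(2)
    by (rule in_Zloc_inverse_of_nat[rotated])
  from this[of 12] this[of 3] this[of 2] have "in_Zloc p (1/12)" "in_Zloc p (1/3)" "in_Zloc p (1/2)"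
    by simp_all
  then show ?thesis
    unfolding Dop_eq
    by (intro poly_in_Zloc_add poly_in_Zloc_diff poly_in_Zloc_Const_mult poly_in_Zloc_Var_mult
        poly_in_Zloc_pderiv_var assms(3))
qed

lemma poly_in_Zloc_Dop_power_PP:
  assumes "prime p" "5 \<le> p" shows "poly_in_Zloc p ((Dop ^^ n) PP)"
proof (induction n)
  case 0
  show ?case
    using in_Zloc_of_int[of p 0] in_Zloc_of_int[of p 1]
    by (simp add: poly_in_Zloc_def Var_def lookup_single when_def)
next
  case (Suc n)
  then show ?case
    using poly_in_Zloc_Dop[OF assms] by simp
qed

lemma weight_eq_imp_lookup_0_eq_0:
  assumes "weight m = 2 * int p + 2" "1 < p" "p dvd lookup m 0"
  shows "lookup m 0 = 0"
proof -
  obtain j where j: "lookup m 0 = p * j"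
    using assms(3) by blast
  have "j = 0"
  proof (rule ccontr)
    assume "j \<noteq> 0"
    then consider "j = 1" | "2 \<le> j"
      by linarith
    then show False
    proof cases
      case 1
      then have "4 * int (lookup m 1) + 6 * int (lookup m 2) = 2"
        using assms(1) j by (simp add: weight_def)
      then show False
        by presburger
    next
      case 2
      then have "p * 2 \<le> lookup m 0"
        unfolding j by (rule mult_le_mono2)
      then show False
        using assms(1,2) by (simp add: weight_def)
    qed
  qed
  with j show ?thesis
    by simp
qed

lemma lookup_Dop_power_PP_divide_in_Zloc:
  assumes "prime p" "5 \<le> p" "0 < lookup m 0" "\<not> p dvd lookup m 0"
  shows "in_Zloc p (lookup ((Dop ^^ p) PP) m / of_nat p)"
proof -
  define a where "a = lookup m 0"
  have "Suc (p - 1) = p"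
    using assms(2) by simp
  then have "pderiv_var 0 ((Dop ^^ p) PP) = Const (of_nat (p * (p + 1)) / 12) * (Dop ^^ (p - 1)) PP"
    using pderiv_var_0_Dop_power_PP[of "p - 1"] by (simp add: add.commute)
  then have "of_nat a * lookup ((Dop ^^ p) PP) m
      = of_nat (p * (p + 1)) / 12 * lookup ((Dop ^^ (p - 1)) PP) (m - var_exp 0)"
    using lookup_pderiv_var_diff_var_exp[OF assms(3), of "(Dop ^^ p) PP"]
    by (simp add: a_def lookup_Const_mult)
  then have eq: "lookup ((Dop ^^ p) PP) m / of_nat p
      = of_nat (p + 1) * (1 / of_nat (12 * a)) * lookup ((Dop ^^ (p - 1)) PP) (m - var_exp 0)"
    using assms(2,3) by (simp add: a_def field_simps)
  have "coprime (12 * a) p"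
    using coprime_12_prime[OF assms(1,2)] assms(1,4)
    by (simp add: a_def prime_imp_coprime coprime_commute)
  then show ?thesis
    unfolding eq using assms(3) poly_in_Zloc_Dop_power_PP[OF assms(1,2)]
    by (intro in_Zloc_mult in_Zloc_of_nat in_Zloc_inverse_of_nat) (simp_all add: a_def poly_in_Zloc_def)
qed

theorem proposition3p7:
  fixes p :: nat
  assumes "prime p" and "p \<ge> 5"
  shows "poly_in_Zloc p ((Dop ^^ p) PP) \<and> reduction_in_QR p ((Dop ^^ p) PP)"
proof
  show "poly_in_Zloc p ((Dop ^^ p) PP)"
    using poly_in_Zloc_Dop_power_PP[OF assms] .
  show "reduction_in_QR p ((Dop ^^ p) PP)"
    unfolding reduction_in_QR_def
  proof (intro allI impI)
    fix m :: "nat \<Rightarrow>\<^sub>0 nat"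
    assume "lookup m 0 \<noteq> 0"
    show "in_Zloc p (lookup ((Dop ^^ p) PP) m / of_nat p)"
    proof (cases "p dvd lookup m 0")
      case True
      have "weight m \<noteq> 2 * int p + 2"
        using weight_eq_imp_lookup_0_eq_0[OF _ _ True] \<open>lookup m 0 \<noteq> 0\<close> assms(2) by auto
      then have "lookup ((Dop ^^ p) PP) m = 0"
        using homogeneous_Dop_power_PP[of p] by (auto simp: homogeneous_def)
      then show ?thesis
        using in_Zloc_of_int[of p 0] by simp
    next
      case False
      with \<open>lookup m 0 \<noteq> 0\<close> show ?thesis
        using lookup_Dop_power_PP_divide_in_Zloc[OF assms] by simp
    qed
  qed
qed

end
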